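(* Let $N\ge 2$ be an integer and $b_1,\dots,b_N\in\{0,1\}$ with $b_N=1$, and suppose $b:=\sum_{j=1}^N b_j2^{-j}$ satisfies $2^N b>1$ ($2^Nb$ is then an odd integer). Let $P_b(x)=x^N-\sum_{j=1}^N b_jx^{N-j}$. Then $P_b$ has a real root, and its largest real root $s_b$ (the silver number of index $b$) satisfies $1<s_b<2$. *)

theory Defs
  imports Complex_Main
begin

definition silverP :: "nat \<Rightarrow> (nat \<Rightarrow> nat) \<Rightarrow> real \<Rightarrow> real" where
  "silverP N b x = x ^ N - (\<Sum>j=1..N. real (b j) * x ^ (N - j))"

end

theory Submission
  imports Defs "HOL-Analysis.Analysis"
begin

text \<open>At \<open>x = 1\<close> the polynomial equals \<open>1 - \<Sum>b\<^sub>j\<close>, which is negative because \<open>b\<close> has at least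
two nonzero digits; for \<open>x \<ge> 2\<close> it is positive because \<open>x\<^sup>N\<close> exceeds \<open>\<Sum>\<^sub>k\<^sub><\<^sub>N x\<^sup>k\<close>.
The zero set is closed, so its part in \<open>[1, 2]\<close> is compact and nonempty by the intermediate
value theorem, and its maximum is the largest real root.\<close>

lemma sum_power_less_power:
  fixes x :: real
  assumes "x \<ge> 2"
  shows "(\<Sum>k<n. x ^ k) < x ^ n"
proof (induction n)
  case (Suc n)
  have "x ^ n + x ^ n \<le> x * x ^ n"
    using assms mult_right_mono[of 2 x "x ^ n"] by simp
  with Suc show ?case by simp
qed simp

lemma sum_atLeast_Suc_atMost_diff_reindex:
  fixes f :: "nat \<Rightarrow> 'a::comm_monoid_add"
  shows "(\<Sum>j=1..N. f (N - j)) = (\<Sum>k<N. f k)"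
  using sum.atLeastLessThan_rev_at_least_Suc_atMost[of f 0 N] by (simp add: atLeast0LessThan)

lemma continuous_on_silverP: "continuous_on A (silverP N b)"
  unfolding silverP_def by (auto intro!: continuous_intros)

lemma silverP_pos:
  assumes "\<forall>j\<in>{1..N}. b j \<le> 1" and "x \<ge> 2"
  shows "silverP N b x > 0"
proof -
  have "(\<Sum>j=1..N. real (b j) * x ^ (N - j)) \<le> (\<Sum>j=1..N. x ^ (N - j))"
    using assms by (intro sum_mono) (simp add: mult_left_le_one_le)
  also have "\<dots> < x ^ N"
    unfolding sum_atLeast_Suc_atMost_diff_reindex[of "\<lambda>k. x ^ k"]
    using sum_power_less_power[OF assms(2)] .
  finally show ?thesis unfolding silverP_def by simp
qed

lemma silverP_one: "silverP N b 1 = 1 - (\<Sum>j=1..N. real (b j))"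
  by (simp add: silverP_def)

lemma two_le_digit_sum:
  fixes b :: "nat \<Rightarrow> nat"
  assumes "N \<ge> 1" and "b N = 1"
    and "2 ^ N * (\<Sum>j=1..N. real (b j) / 2 ^ j) > 1"
  shows "(\<Sum>j=1..N. real (b j)) \<ge> 2"
proof -
  have split: "{1..N} = insert N {1..<N}" using assms(1) by auto
  have "\<exists>i\<in>{1..<N}. b i \<noteq> 0"
  proof (rule ccontr)
    assume "\<not> (\<exists>i\<in>{1..<N}. b i \<noteq> 0)"
    then have "(\<Sum>j=1..N. real (b j) / 2 ^ j) = 1 / 2 ^ N"
      unfolding split using assms(2) by simp
    with assms(3) show False by simp
  qed
  then obtain i where i: "i \<in> {1..<N}" "b i \<noteq> 0" ..
  have "1 \<le> real (b i)" using i(2) by simp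
  also have "\<dots> \<le> (\<Sum>j=1..<N. real (b j))"
    using i(1) by (intro member_le_sum) auto
  finally have "(\<Sum>j=1..<N. real (b j)) \<ge> 1" .
  then show ?thesis unfolding split using assms(2) by simp
qed

lemma greatest_zero_between:
  fixes f :: "real \<Rightarrow> real"
  assumes "continuous_on UNIV f" and "f a < 0" and "a \<le> c" and "\<And>x. x \<ge> c \<Longrightarrow> f x > 0"
  shows "\<exists>s. f s = 0 \<and> (\<forall>x. f x = 0 \<longrightarrow> x \<le> s) \<and> a < s \<and> s < c"
proof -
  let ?S = "f -` {0} \<inter> {a..c}"
  have "compact ?S"
    using closed_vimage[OF closed_singleton assms(1)] by (intro closed_Int_compact) auto
  moreover obtain x0 where "a \<le> x0" "x0 \<le> c" "f x0 = 0"
    using IVT'[of f a 0 c] assms(2-4) continuous_on_subset[OF assms(1)] by fastforce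
  then have "?S \<noteq> {}" by auto
  ultimately obtain s where s: "s \<in> ?S" and max: "\<forall>y\<in>?S. y \<le> s"
    using compact_attains_sup by blast
  have "x \<le> s" if "f x = 0" for x
  proof (cases "x < a")
    case True
    with s show ?thesis by simp
  next
    case False
    moreover have "x < c" using assms(4)[of x] that by force
    ultimately show ?thesis using max that by simp
  qed
  moreover have "s \<noteq> a" "s \<noteq> c"
    using s assms(2) assms(4)[of c] by auto
  ultimately show ?thesis using s by force
qed

theorem mainTheorem4:
  fixes N :: nat and b :: "nat \<Rightarrow> nat"
  assumes "N \<ge> 2"
    and "\<forall>j\<in>{1..N}. b j \<in> {0, 1}"
    and "b N = 1"
    and "2 ^ N * (\<Sum>j=1..N. real (b j) / 2 ^ j) > 1"
  shows "(\<exists>x. silverP N b x = 0) \<and>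
         (\<exists>s. silverP N b s = 0 \<and> (\<forall>x. silverP N b x = 0 \<longrightarrow> x \<le> s) \<and> 1 < s \<and> s < 2)"
proof -
  have "silverP N b 1 < 0"
    using two_le_digit_sum[of N b] assms(1,3,4) by (simp add: silverP_one)
  moreover have "silverP N b x > 0" if "x \<ge> 2" for x
    using assms(2) that by (intro silverP_pos) auto
  ultimately have "\<exists>s. silverP N b s = 0 \<and> (\<forall>x. silverP N b x = 0 \<longrightarrow> x \<le> s) \<and> 1 < s \<and> s < 2"
    by (intro greatest_zero_between continuous_on_silverP) auto
  then show ?thesis by blast
qed

end
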